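(* Let $w:[0,1]\to\mathbb{R}^+$ be a non-increasing differentiable function (extended to $\mathbb{R}$ by $w(y)=w(0)$ for $y\le0$, $w(y)=w(1)$ for $y\ge1$), and let $R$ be a $k\times k$ doubly stochastic matrix with eigenvalues $1,\lambda_1,\dots,\lambda_s$. Then $\frac1k\mathbf 1$ is a stable equilibrium of the ODE $\dot y=h(y)$, where $h(y)=\frac{\mathbf{w}(y)}{S_w(y)}R-y$, if $$\Re(\lambda_i)>\frac{k\,w(1/k)}{w'(1/k)}\qquad\text{for all } i=1,\dots,s.$$
   Context: $\mathbf 1=(1,\dots,1)\in\mathbb{R}^k$ (row vector). For $y\in\mathbb{R}^k$, $\mathbf{w}(y)=(w(y_1),\dots,w(y_k))$ and $S_w(y)=\sum_i w(y_i)$. $R$ doubly stochastic means nonnegative entries with all row and column sums $1$; $1$ is its maximal eigenvalue and $\lambda_1,\dots,\lambda_s$ denote its remaining distinct eigenvalues. An equilibrium $x^*$ of $\dot y=h(y)$ (i.e. $h(x^* )=0$) is called stable if all eigenvalues of the Jacobian matrix of $h$ at $x^*$ have negative real part. *)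

theory Defs
  imports "HOL-Analysis.Analysis"
begin

definition doubly_stochastic :: "real^'k^'k \<Rightarrow> bool" where
  "doubly_stochastic R \<longleftrightarrow>
     (\<forall>i j. R $ i $ j \<ge> 0) \<and>
     (\<forall>i. (\<Sum>j\<in>UNIV. R $ i $ j) = 1) \<and>
     (\<forall>j. (\<Sum>i\<in>UNIV. R $ i $ j) = 1)"

definition cmat :: "real^'k^'k \<Rightarrow> complex^'k^'k" where
  "cmat A = (\<chi> i j. complex_of_real (A $ i $ j))"

definition is_eigenvalue :: "real^'k^'k \<Rightarrow> complex \<Rightarrow> bool" where
  "is_eigenvalue A \<mu> \<longleftrightarrow> (\<exists>v::complex^'k. v \<noteq> 0 \<and> cmat A *v v = \<mu> *s v)"

definition jacobian :: "(real^'k \<Rightarrow> real^'k) \<Rightarrow> real^'k \<Rightarrow> real^'k^'k" where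
  "jacobian h x = matrix (frechet_derivative h (at x))"

definition stable_equilibrium :: "(real^'k \<Rightarrow> real^'k) \<Rightarrow> real^'k \<Rightarrow> bool" where
  "stable_equilibrium h x \<longleftrightarrow> h x = 0 \<and> h differentiable (at x) \<and>
     (\<forall>\<mu>. is_eigenvalue (jacobian h x) \<mu> \<longrightarrow> Re \<mu> < 0)"

definition wvec :: "(real \<Rightarrow> real) \<Rightarrow> real^'k \<Rightarrow> real^'k" where
  "wvec w y = (\<chi> i. w (y $ i))"

definition S_w :: "(real \<Rightarrow> real) \<Rightarrow> real^'k \<Rightarrow> real" where
  "S_w w y = (\<Sum>i\<in>UNIV. w (y $ i))"

definition hfield :: "(real \<Rightarrow> real) \<Rightarrow> real^'k^'k \<Rightarrow> real^'k \<Rightarrow> real^'k" where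
  "hfield w R y = (1 / S_w w y) *\<^sub>R (wvec w y v* R) - y"

end

theory Submission
  imports Defs
begin

text \<open>
  At the uniform point c = 1/k the column sums of R give w(y) R = w(c) \<one>, so h vanishes there, and
  differentiating h gives the Jacobian J = a (R^T - E/k) - I, where E is the all-ones matrix and
  a = w'(c) / (k w(c)) \<le> 0 because w is non-increasing. Summing the eigenvalue equation J z = \<mu> z
  over all coordinates (the rows of R sum to 1) gives (\<mu> + 1) \<Sum>z = 0. So either \<mu> = -1, or
  \<Sum>z = 0 and then z is a left eigenvector of R for some \<nu> with \<mu> = a \<nu> - 1. In the latter case
  Re \<mu> < 0 amounts to a Re \<nu> < 1, which is the hypothesis on the spectrum of R when \<nu> \<noteq> 1
  and follows from a \<le> 0 when \<nu> = 1.
\<close>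

lemma mat_matrix_vector_mult: "mat c *v v = c *s (v :: 'a::comm_semiring_1^'n)"
  by (simp add: vec_eq_iff matrix_vector_mult_def mat_def if_distrib[of "\<lambda>x. x * _"] cong: if_cong)

lemma eigenvector_iff_not_invertible:
  fixes A :: "'a::field^'n^'n"
  shows "(\<exists>v. v \<noteq> 0 \<and> A *v v = \<mu> *s v) \<longleftrightarrow> \<not> invertible (A - mat \<mu>)"
  by (auto simp: invertible_left_inverse matrix_left_invertible_ker
      matrix_vector_mult_diff_rdistrib mat_matrix_vector_mult)

lemma cmat_transpose: "cmat (transpose A) = transpose (cmat A)"
  by (simp add: cmat_def transpose_def)

lemma invertible_transpose_iff:
  fixes A :: "'a::field^'n^'n"
  shows "invertible (transpose A) \<longleftrightarrow> invertible A"
  by (metis invertible_left_inverse invertible_right_inverse left_invertible_transpose)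

lemma is_eigenvalue_transpose: "is_eigenvalue (transpose A) \<mu> \<longleftrightarrow> is_eigenvalue A \<mu>"
proof -
  have "transpose (cmat A) - mat \<mu> = transpose (cmat A - mat \<mu>)"
    by (simp add: transpose_def vec_eq_iff mat_def)
  then show ?thesis
    by (simp only: is_eigenvalue_def eigenvector_iff_not_invertible cmat_transpose invertible_transpose_iff)
qed

lemma is_eigenvalue_iff_left_eigenvector:
  "is_eigenvalue A \<mu> \<longleftrightarrow> (\<exists>z. z \<noteq> 0 \<and> z v* cmat A = \<mu> *s z)"
  by (metis is_eigenvalue_def is_eigenvalue_transpose cmat_transpose transpose_matrix_vector)

definition equilibrium_jacobian :: "real \<Rightarrow> real^'k^'k \<Rightarrow> real^'k^'k" where
  "equilibrium_jacobian a R =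
     (\<chi> j m. a * (R $ m $ j - 1 / real CARD('k)) - (if j = m then 1 else 0))"

lemma sum_vector_matrix_mult_row_stochastic:
  fixes R :: "real^'k^'k" and z :: "complex^'k"
  assumes "\<And>i. (\<Sum>j\<in>UNIV. R $ i $ j) = 1"
  shows "(\<Sum>j\<in>UNIV. (z v* cmat R) $ j) = (\<Sum>i\<in>UNIV. z $ i)"
proof -
  have "(\<Sum>j\<in>UNIV. (z v* cmat R) $ j) = (\<Sum>i\<in>UNIV. z $ i * of_real (\<Sum>j\<in>UNIV. R $ i $ j))"
    unfolding vector_matrix_mult_def cmat_def
    by (simp add: sum_distrib_left) (rule sum.swap)
  then show ?thesis
    using assms by simp
qed

lemma eigenvalue_equilibrium_jacobian:
  fixes R :: "real^'k^'k"
  assumes rows: "\<And>i. (\<Sum>j\<in>UNIV. R $ i $ j) = 1"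
    and "is_eigenvalue (equilibrium_jacobian a R) \<mu>"
  shows "\<mu> = -1 \<or> (\<exists>\<nu>. is_eigenvalue R \<nu> \<and> \<mu> = of_real a * \<nu> - 1)"
proof -
  obtain z where "z \<noteq> 0" and z: "cmat (equilibrium_jacobian a R) *v z = \<mu> *s z"
    using assms(2) unfolding is_eigenvalue_def by blast
  define s where "s = (\<Sum>i\<in>UNIV. z $ i)"
  define n :: complex where "n = of_nat CARD('k)"
  have comp: "\<mu> * z $ j = of_real a * (z v* cmat R) $ j - of_real a * s / n - z $ j" for j
  proof -
    have "\<mu> * z $ j = (cmat (equilibrium_jacobian a R) *v z) $ j"
      using z by simp
    also have "\<dots> = (\<Sum>m\<in>UNIV. (of_real a * (cmat R $ m $ j - 1 / n) - (if j = m then 1 else 0)) * z $ m)"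
      by (simp add: matrix_vector_mult_def cmat_def equilibrium_jacobian_def n_def if_distrib[of of_real] cong: if_cong)
    also have "\<dots> = of_real a * (z v* cmat R) $ j - of_real a * s / n - z $ j"
      by (simp add: algebra_simps sum_subtractf sum_distrib_left sum_divide_distrib
          sum.distrib vector_matrix_mult_def s_def if_distrib[of "\<lambda>x. _ * x"] cong: if_cong)
    finally show ?thesis .
  qed
  have "(\<mu> + 1) * s = 0"
  proof -
    have "\<mu> * s = (\<Sum>j\<in>UNIV. of_real a * (z v* cmat R) $ j - of_real a * s / n - z $ j)"
      by (simp add: s_def sum_distrib_left comp)
    also have "\<dots> = - s"
      by (simp add: sum_subtractf sum_vector_matrix_mult_row_stochastic[OF rows] n_def s_def
          flip: sum_distrib_left)
    finally show ?thesis by (simp add: algebra_simps)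
  qed
  moreover have "\<exists>\<nu>. is_eigenvalue R \<nu> \<and> \<mu> = of_real a * \<nu> - 1" if "s = 0" "\<mu> \<noteq> -1"
  proof -
    have left: "of_real a * (z v* cmat R) $ j = (\<mu> + 1) * z $ j" for j
      using comp[of j] \<open>s = 0\<close> by (simp add: algebra_simps)
    have "a \<noteq> 0"
      using left \<open>z \<noteq> 0\<close> \<open>\<mu> \<noteq> -1\<close> by (auto simp: vec_eq_iff add_eq_0_iff2)
    then have "z v* cmat R = ((\<mu> + 1) / of_real a) *s z"
      using left by (simp add: vec_eq_iff field_simps)
    then show ?thesis
      using \<open>z \<noteq> 0\<close> \<open>a \<noteq> 0\<close> unfolding is_eigenvalue_iff_left_eigenvector by force
  qed
  ultimately show ?thesis by (auto simp: add_eq_0_iff2)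
qed

lemma Re_eigenvalue_equilibrium_jacobian_neg:
  fixes R :: "real^'k^'k"
  assumes rows: "\<And>i. (\<Sum>j\<in>UNIV. R $ i $ j) = 1"
    and "a \<le> 0"
    and spectrum: "\<And>\<nu>. is_eigenvalue R \<nu> \<Longrightarrow> \<nu> \<noteq> 1 \<Longrightarrow> a * Re \<nu> < 1"
    and "is_eigenvalue (equilibrium_jacobian a R) \<mu>"
  shows "Re \<mu> < 0"
proof -
  consider "\<mu> = -1" | \<nu> where "is_eigenvalue R \<nu>" "\<mu> = of_real a * \<nu> - 1"
    using eigenvalue_equilibrium_jacobian[OF rows assms(4)] by blast
  then show ?thesis
  proof cases
    case (2 \<nu>)
    then show ?thesis
      using spectrum[of \<nu>] \<open>a \<le> 0\<close> by (cases "\<nu> = 1") auto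
  qed simp
qed

lemma has_real_derivative_nonpos_if_antimono_on:
  fixes f :: "real \<Rightarrow> real"
  assumes "antimono_on S f" and "x \<in> S" and "x islimpt S"
    and "(f has_real_derivative d) (at x within S)"
  shows "d \<le> 0"
proof (rule tendsto_upperbound)
  show "((\<lambda>y. (f y - f x) / (y - x)) \<longlongrightarrow> d) (at x within S)"
    using assms(4) by (simp add: has_field_derivative_iff)
  have "(f y - f x) / (y - x) \<le> 0" if "y \<in> S" "y \<noteq> x" for y
    using monotone_onD[OF assms(1) \<open>x \<in> S\<close> \<open>y \<in> S\<close>] monotone_onD[OF assms(1) \<open>y \<in> S\<close> \<open>x \<in> S\<close>] \<open>y \<noteq> x\<close>
    by (cases "x < y") (auto simp: divide_nonpos_pos divide_nonneg_neg)
  then show "\<forall>\<^sub>F y in at x within S. (f y - f x) / (y - x) \<le> 0"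
    by (auto simp: eventually_at_filter)
  show "at x within S \<noteq> bot"
    using assms(3) trivial_limit_within by blast
qed

lemma clamped_extension_pos:
  fixes w :: "real \<Rightarrow> real"
  assumes "\<forall>y\<in>{0..1}. w y > 0" and "\<forall>y\<le>0. w y = w 0" and "\<forall>y\<ge>1. w y = w 1"
  shows "w t > 0"
proof -
  consider "t \<le> 0" | "t \<ge> 1" | "t \<in> {0..1}"
    by force
  then show ?thesis
    using assms(1) assms(2)[rule_format, of t] assms(3)[rule_format, of t] by cases auto
qed

lemma stable_equilibriumI:
  assumes "h x = 0" and "(h has_derivative L) (at x)"
    and "\<And>\<mu>. is_eigenvalue (matrix L) \<mu> \<Longrightarrow> Re \<mu> < 0"
  shows "stable_equilibrium h x"
  using assms frechet_derivative_at[OF assms(2)]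
  unfolding stable_equilibrium_def jacobian_def differentiable_def by auto

lemma wvec_const_vector_matrix_mult:
  fixes R :: "real^'k^'k"
  assumes "\<And>j. (\<Sum>i\<in>UNIV. R $ i $ j) = 1"
  shows "wvec w (\<chi> i. c) v* R = (\<chi> j. w c)"
  using assms by (simp add: vec_eq_iff vector_matrix_mult_def wvec_def flip: sum_distrib_left)

lemma hfield_uniform_eq_0:
  fixes R :: "real^'k^'k"
  assumes cols: "\<And>j. (\<Sum>i\<in>UNIV. R $ i $ j) = 1" and "w (1 / real CARD('k)) \<noteq> 0"
  shows "hfield w R (\<chi> i. 1 / real CARD('k)) = 0"
  using assms(2) by (simp add: hfield_def S_w_def vec_eq_iff wvec_const_vector_matrix_mult[OF cols])

lemma wvec_vector_matrix_mult: "wvec w y v* R = (\<Sum>i\<in>UNIV. w (y $ i) *\<^sub>R R $ i)"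
  by (simp add: vec_eq_iff vector_matrix_mult_def wvec_def)

lemma has_derivative_hfield:
  fixes R :: "real^'k^'k"
  assumes deriv: "\<And>i. (w has_real_derivative w' (y $ i)) (at (y $ i))" and "S_w w y \<noteq> 0"
  shows "(hfield w R has_derivative
      (\<lambda>v. (1 / S_w w y) *\<^sub>R (\<Sum>i\<in>UNIV. (w' (y $ i) * v $ i) *\<^sub>R R $ i)
         - ((\<Sum>i\<in>UNIV. w' (y $ i) * v $ i) / (S_w w y)\<^sup>2) *\<^sub>R (wvec w y v* R) - v)) (at y)"
proof -
  have comp: "((\<lambda>y. w (y $ i)) has_derivative (\<lambda>v. w' (y $ i) * v $ i)) (at y)" for i
    using has_derivative_compose[OF bounded_linear.has_derivative[OF bounded_linear_vec_nth has_derivative_ident]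
        deriv[of i, unfolded has_field_derivative_def]]
    by (simp add: mult.commute)
  have "hfield w R = (\<lambda>y. (1 / S_w w y) *\<^sub>R (\<Sum>i\<in>UNIV. w (y $ i) *\<^sub>R R $ i) - y)"
    by (simp add: hfield_def wvec_vector_matrix_mult fun_eq_iff)
  then show ?thesis
    using assms(2) unfolding S_w_def
    by (auto intro!: derivative_eq_intros comp simp: wvec_vector_matrix_mult power2_eq_square)
qed

lemma has_derivative_hfield_uniform:
  fixes R :: "real^'k^'k"
  defines "c \<equiv> 1 / real CARD('k)"
  assumes cols: "\<And>j. (\<Sum>i\<in>UNIV. R $ i $ j) = 1"
    and deriv: "(w has_real_derivative d) (at c)" and "w c \<noteq> 0"
  obtains L where "(hfield w R has_derivative L) (at (\<chi> i. c))"
    and "matrix L = equilibrium_jacobian (d / (real CARD('k) * w c)) R"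
proof -
  define x :: "real^'k" where "x = (\<chi> i. c)"
  have S: "S_w w x = real CARD('k) * w c"
    by (simp add: S_w_def x_def)
  have wR: "wvec w x v* R = (\<chi> j. w c)"
    unfolding x_def by (rule wvec_const_vector_matrix_mult[OF cols])
  define L where "L = (\<lambda>v. (1 / S_w w x) *\<^sub>R (\<Sum>i\<in>UNIV. (d * v $ i) *\<^sub>R R $ i)
         - ((\<Sum>i\<in>UNIV. d * v $ i) / (S_w w x)\<^sup>2) *\<^sub>R (wvec w x v* R) - v)"
  have "(hfield w R has_derivative L) (at x)"
    unfolding L_def using has_derivative_hfield[of w "\<lambda>_. d" x R] deriv S \<open>w c \<noteq> 0\<close>
    by (simp add: x_def)
  have "L (axis m 1) $ j = d / (real CARD('k) * w c) * (R $ m $ j - 1 / real CARD('k)) - (if j = m then 1 else 0)"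
    for m j
    using \<open>w c \<noteq> 0\<close>
    by (simp add: L_def S wR axis_def if_distrib[of "\<lambda>x. _ * x"]
        power2_eq_square c_def field_simps cong: if_cong)
  then have "matrix L = equilibrium_jacobian (d / (real CARD('k) * w c)) R"
    by (simp add: matrix_def equilibrium_jacobian_def vec_eq_iff)
  with \<open>(hfield w R has_derivative L) (at x)\<close> that show ?thesis
    unfolding x_def by blast
qed

lemma row_stochastic_card_1_entry:
  fixes R :: "real^'k^'k"
  assumes "CARD('k) = 1" and rows: "\<And>i. (\<Sum>j\<in>UNIV. R $ i $ j) = 1"
  shows "R $ i $ j = 1"
proof -
  obtain k0 :: 'k where UNIV: "UNIV = {k0}"
    using card_1_singletonE[OF assms(1)] .
  then have "i = k0" "j = k0"
    by auto
  then show ?thesis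
    using rows[of i] by (simp add: UNIV)
qed

lemma hfield_card_1:
  fixes R :: "real^'k^'k"
  assumes "CARD('k) = 1" and rows: "\<And>i. (\<Sum>j\<in>UNIV. R $ i $ j) = 1" and "\<And>t. w t \<noteq> 0"
  shows "hfield w R = (\<lambda>y. 1 - y)"
proof -
  obtain k0 :: 'k where UNIV: "UNIV = {k0}"
    using card_1_singletonE[OF assms(1)] .
  show ?thesis
    using row_stochastic_card_1_entry[OF assms(1) rows] assms(3)
    by (simp add: fun_eq_iff vec_eq_iff hfield_def S_w_def wvec_def vector_matrix_mult_def UNIV)
qed

lemma equilibrium_jacobian_card_1:
  fixes R :: "real^'k^'k"
  assumes "CARD('k) = 1" and rows: "\<And>i. (\<Sum>j\<in>UNIV. R $ i $ j) = 1"
  shows "equilibrium_jacobian a R = matrix uminus"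
  using assms(1) row_stochastic_card_1_entry[OF assms]
  by (simp add: equilibrium_jacobian_def matrix_def axis_def vec_eq_iff)

lemma has_derivative_hfield_equilibrium:
  fixes R :: "real^'k^'k"
  defines "c \<equiv> 1 / real CARD('k)"
  assumes rows: "\<And>i. (\<Sum>j\<in>UNIV. R $ i $ j) = 1" and cols: "\<And>j. (\<Sum>i\<in>UNIV. R $ i $ j) = 1"
    and w_nz: "\<And>t. w t \<noteq> 0" and deriv: "(w has_real_derivative d) (at c within {0..1})"
  obtains L where "(hfield w R has_derivative L) (at (\<chi> i. c))"
    and "matrix L = equilibrium_jacobian (d / (real CARD('k) * w c)) R"
proof (cases "CARD('k) = 1")
  case True
  \<comment> \<open>Here c = 1 is an endpoint, where w need not be differentiable, but h does not depend on w.\<close>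
  have "hfield w R = (\<lambda>y. 1 - y)"
    using hfield_card_1[OF True rows w_nz] .
  then have "(hfield w R has_derivative uminus) (at (\<chi> i. c))"
    by (auto intro!: derivative_eq_intros)
  then show ?thesis
    using that equilibrium_jacobian_card_1[OF True rows] by metis
next
  case False
  then have "c \<in> interior {0..1}"
    by (simp add: c_def Suc_lessI)
  then have "(w has_real_derivative d) (at c)"
    using deriv at_within_interior by metis
  then show ?thesis
    using has_derivative_hfield_uniform[where w = w, OF cols _ w_nz] that unfolding c_def by blast
qed

theorem proposition3:
  fixes w w' :: "real \<Rightarrow> real" and R :: "real^'k^'k"
  assumes pos: "\<forall>y\<in>{0..1}. w y > 0"
    and noninc: "\<forall>x y. 0 \<le> x \<and> x \<le> y \<and> y \<le> 1 \<longrightarrow> w y \<le> w x"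
    and diff: "\<forall>x\<in>{0..1}. (w has_real_derivative w' x) (at x within {0..1})"
    and ext0: "\<forall>y\<le>0. w y = w 0"
    and ext1: "\<forall>y\<ge>1. w y = w 1"
    and ds: "doubly_stochastic R"
    and cond: "\<forall>\<mu>. is_eigenvalue R \<mu> \<and> \<mu> \<noteq> 1 \<longrightarrow>
        Re \<mu> > real CARD('k) * w (1 / real CARD('k)) / w' (1 / real CARD('k))"
  shows "stable_equilibrium (hfield w R) (\<chi> i. 1 / real CARD('k))"
proof -
  define c where "c = 1 / real CARD('k)"
  define a where "a = w' c / (real CARD('k) * w c)"
  have rows: "\<And>i. (\<Sum>j\<in>UNIV. R $ i $ j) = 1" and cols: "\<And>j. (\<Sum>i\<in>UNIV. R $ i $ j) = 1"
    using ds unfolding doubly_stochastic_def by auto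
  have w_pos: "w t > 0" for t
    using clamped_extension_pos[OF pos ext0 ext1] .
  then have w_nz: "w t \<noteq> 0" for t
    by (metis less_irrefl)
  have "c \<in> {0..1}"
    by (simp add: c_def)
  then have "w' c \<le> 0"
    using noninc diff
    by (intro has_real_derivative_nonpos_if_antimono_on[of "{0..1}" w c]) (auto intro: monotone_onI)
  then have "a \<le> 0"
    using w_pos by (simp add: a_def divide_nonpos_pos)
  have spectrum: "a * Re \<nu> < 1" if "is_eigenvalue R \<nu>" "\<nu> \<noteq> 1" for \<nu>
  proof (cases "a = 0")
    case False
    then have "1 / a < Re \<nu>"
      using cond that by (simp add: a_def c_def)
    with \<open>a \<le> 0\<close> False show ?thesis
      by (simp add: field_simps)
  qed simp
  obtain L where L: "(hfield w R has_derivative L) (at (\<chi> i. c))"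
    and jacobian: "matrix L = equilibrium_jacobian a R"
    using has_derivative_hfield_equilibrium[where w = w, OF rows cols w_nz]
      diff \<open>c \<in> {0..1}\<close> unfolding a_def c_def by blast
  have "stable_equilibrium (hfield w R) (\<chi> i. c)"
  proof (rule stable_equilibriumI[OF _ L])
    show "hfield w R (\<chi> i. c) = 0"
      using hfield_uniform_eq_0[OF cols w_nz] unfolding c_def .
    show "Re \<mu> < 0" if "is_eigenvalue (matrix L) \<mu>" for \<mu>
      using Re_eigenvalue_equilibrium_jacobian_neg[OF rows \<open>a \<le> 0\<close> spectrum] that jacobian by simp
  qed
  then show ?thesis
    by (simp add: c_def)
qed

end
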